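(* Let $q(w)=w^4$, $\Psi[z:w:t]=[z:iw+t:it+w]$, and fix constants $0<\lambda<1$, $\tilde\lambda>1$ and integers $l,\tilde l\ge1$. For $(\alpha,\eta)\in\mathbb{C}^2$ let $G_{\alpha,\eta}(z,w):=(\lambda z+\alpha w+\eta q^l(z),q^l(w))$ and $F_\eta(z,w):=(\tilde\lambda z+\eta q^{\tilde l}(z),q^{\tilde l}(w))$, viewed as maps of $\mathbb{P}^2$ (holomorphic endomorphisms when $\eta\neq0$). There exist $\beta_1>0$, $\rho>0$ and $N\ge1$ such that for all $(\alpha,\eta)\in(\beta_1\mathbb{D}^* )^2$ the open set $U_\rho:=\{[z:w:t]\in\mathbb{P}^2:|z|<\rho\max(|w|,|t|)\}$ is a trapping region for $F_\eta\circ\Psi\circ G^N_{\alpha,\eta}$, i.e. $\overline{F_\eta\circ\Psi\circ G^N_{\alpha,\eta}(U_\rho)}\subset U_\rho$.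
   Context: $\mathbb{D}^*$ is the punctured unit disc, $\beta_1\mathbb{D}^*=\{z:0<|z|<\beta_1\}$. In the paper $\lambda,\tilde\lambda,l,\tilde l$ are the specific constants produced by the preceding construction, but only the stated ranges are used. *)

theory Defs
  imports "HOL-Analysis.Analysis"
begin

text \<open>Points of the projective plane P^2 are represented by their homogeneous
coordinates, i.e. nonzero triples (z,w,t) in C^3; maps of P^2 by homogeneous
polynomial lifts C^3 -> C^3.\<close>

type_synonym hc = "complex \<times> complex \<times> complex"

definition q :: "complex \<Rightarrow> complex" where
  "q w = w ^ 4"

lemma q_iter: "(q ^^ l) w = w ^ (4 ^ l)"
  by (induction l arbitrary: w) (simp_all add: q_def power_mult[symmetric] mult.commute)

text \<open>Homogeneous lift of G_{alpha,eta}(z,w) = (lam z + alpha w + eta q^l(z), q^l(w)),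
 of degree d = 4^l (q^l is the l-th iterate of q, equal to z^(4^l), see q_iter).\<close>
definition G_hom :: "real \<Rightarrow> nat \<Rightarrow> complex \<Rightarrow> complex \<Rightarrow> hc \<Rightarrow> hc" where
  "G_hom lam l \<alpha> \<eta> = (\<lambda>(z, w, t). let d = 4 ^ l in
     (complex_of_real lam * z * t ^ (d - 1) + \<alpha> * w * t ^ (d - 1) + \<eta> * z ^ d,
      w ^ d, t ^ d))"

definition F_hom :: "real \<Rightarrow> nat \<Rightarrow> complex \<Rightarrow> hc \<Rightarrow> hc" where
  "F_hom lam' l' \<eta> = (\<lambda>(z, w, t). let d = 4 ^ l' in
     (complex_of_real lam' * z * t ^ (d - 1) + \<eta> * z ^ d, w ^ d, t ^ d))"

definition Psi :: "hc \<Rightarrow> hc" where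
  "Psi = (\<lambda>(z, w, t). (z, \<i> * w + t, \<i> * t + w))"

definition hscale :: "complex \<Rightarrow> hc \<Rightarrow> hc" where
  "hscale c = (\<lambda>(z, w, t). (c * z, c * w, c * t))"

text \<open>The full preimage in C^3 - {0} of the projectivisation of a set of triples.\<close>
definition proj_cone :: "hc set \<Rightarrow> hc set" where
  "proj_cone S = {hscale c v | c v. c \<noteq> 0 \<and> v \<in> S \<and> v \<noteq> 0}"

text \<open>Closure in P^2, expressed on preimages: since the quotient map
C^3-{0} -> P^2 is open, the preimage of the closure of [A] is closure(cone A) - {0}.\<close>
definition proj_closure :: "hc set \<Rightarrow> hc set" where
  "proj_closure S = closure (proj_cone S) - {0}"

definition U_rho :: "real \<Rightarrow> hc set" where
  "U_rho \<rho> = {(z, w, t). (z, w, t) \<noteq> 0 \<and> cmod z < \<rho> * max (cmod w) (cmod t)}"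

definition trapping :: "(hc \<Rightarrow> hc) \<Rightarrow> hc set \<Rightarrow> bool" where
  "trapping H U \<longleftrightarrow> proj_closure (H ` U) \<subseteq> U"

end

theory Submission
  imports Defs
begin

(*
  Write U_le r for the closed cone |z| <= r max(|w|,|t|) in C^3. In the affine chart the
  first coordinate of G is contracted by lam up to the perturbation alpha w + eta z^d,
  so G maps U_le r into U_le (lam r + |alpha| + |eta| r^d); F is the case alpha = 0
  with lam' in place of lam. Psi only mixes w and t, and by the parallelogram law
  |i w + t|^2 + |i t + w|^2 = 2 (|w|^2 + |t|^2) it does not decrease max(|w|,|t|), so
  it preserves every U_le r. Starting from U_le 1, N steps of G lead into U_le r with
  r close to lam^N; F expands this by about lam', which is beaten by taking N large and
  alpha, eta small. The image of U_rho 1 then lies in a closed cone U_le r with r < 1,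
  which contains its projective closure, so rho = 1 works.
*)

definition U_le :: "real \<Rightarrow> hc set" where
  "U_le \<rho> = {(z, w, t). cmod z \<le> \<rho> * max (cmod w) (cmod t)}"

lemma U_le_mono:
  assumes "r \<le> s"
  shows "U_le r \<subseteq> U_le s"
proof clarify
  fix z w t assume "(z, w, t) \<in> U_le r"
  then have "cmod z \<le> r * max (cmod w) (cmod t)"
    by (simp add: U_le_def)
  also have "\<dots> \<le> s * max (cmod w) (cmod t)"
    using assms by (intro mult_right_mono) (auto simp: le_max_iff_disj)
  finally show "(z, w, t) \<in> U_le s"
    by (simp add: U_le_def)
qed

lemma U_rho_subset_U_le: "U_rho \<rho> \<subseteq> U_le \<rho>"
  by (auto simp: U_rho_def U_le_def)

lemma closed_U_le: "closed (U_le r)"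
proof -
  have "U_le r = {v. cmod (fst v) \<le> r * max (cmod (fst (snd v))) (cmod (snd (snd v)))}"
    by (auto simp: U_le_def)
  then show ?thesis
    by (simp add: closed_Collect_le continuous_intros)
qed

lemma hscale_U_le:
  assumes "v \<in> U_le r"
  shows "hscale c v \<in> U_le r"
proof -
  obtain z w t where v: "v = (z, w, t)" by (cases v)
  have "cmod c * cmod z \<le> cmod c * (r * max (cmod w) (cmod t))"
    using assms by (intro mult_left_mono) (auto simp: U_le_def v)
  also have "\<dots> = r * (cmod c * max (cmod w) (cmod t))"
    by (simp only: mult.left_commute)
  also have "cmod c * max (cmod w) (cmod t) = max (cmod (c * w)) (cmod (c * t))"
    by (simp add: norm_mult max_mult_distrib_left)
  finally show ?thesis
    by (simp add: U_le_def hscale_def v norm_mult)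
qed

lemma U_le_minus_zero_subset_U_rho:
  assumes "r < \<rho>"
  shows "U_le r - {0} \<subseteq> U_rho \<rho>"
proof
  fix v assume v: "v \<in> U_le r - {0}"
  obtain z w t where v_eq: "v = (z, w, t)" by (cases v)
  define M where "M = max (cmod w) (cmod t)"
  have z: "cmod z \<le> r * M" and nz: "(z, w, t) \<noteq> 0"
    using v by (auto simp: U_le_def v_eq M_def)
  have "0 < M"
  proof (rule ccontr)
    assume "\<not> 0 < M"
    then have "w = 0" "t = 0" "z = 0"
      using z by (auto simp: M_def max_def split: if_splits)
    with nz show False by (simp add: zero_prod_def)
  qed
  with z assms have "cmod z < \<rho> * M"
    by (smt (verit) mult_strict_right_mono)
  with nz show "v \<in> U_rho \<rho>"
    by (simp add: U_rho_def v_eq M_def)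
qed

text \<open>U_le r is a closed cone, so it contains the projective closure of each of its subsets.\<close>
lemma trapping_if_image_subset_U_le:
  assumes "r < \<rho>" "H ` U_rho \<rho> \<subseteq> U_le r"
  shows "trapping H (U_rho \<rho>)"
proof -
  have "proj_cone (H ` U_rho \<rho>) \<subseteq> U_le r"
    using assms(2) hscale_U_le by (force simp: proj_cone_def)
  then have "closure (proj_cone (H ` U_rho \<rho>)) \<subseteq> U_le r"
    by (rule closure_minimal) (rule closed_U_le)
  then show ?thesis
    using U_le_minus_zero_subset_U_rho[OF assms(1)]
    by (auto simp: trapping_def proj_closure_def)
qed

lemma max_power_eq_power_max:
  fixes a b :: real
  assumes "0 \<le> a" "0 \<le> b"
  shows "max (a ^ n) (b ^ n) = max a b ^ n"
  using assms power_mono[of a b n] power_mono[of b a n] by (auto simp: max_def)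

lemma F_hom_eq_G_hom: "F_hom lam l \<eta> = G_hom lam l 0 \<eta>"
  by (simp add: F_hom_def G_hom_def)

lemma G_hom_U_le:
  assumes "0 \<le> r" "v \<in> U_le r"
  shows "G_hom lam l \<alpha> \<eta> v \<in> U_le (\<bar>lam\<bar> * r + cmod \<alpha> + cmod \<eta> * r ^ (4 ^ l))"
proof -
  obtain z w t where v: "v = (z, w, t)" by (cases v)
  define d :: nat where "d = 4 ^ l"
  define M where "M = max (cmod w) (cmod t)"
  have M: "0 \<le> M" "cmod w \<le> M" "cmod t \<le> M"
    by (auto simp: M_def le_max_iff_disj)
  have z: "cmod z \<le> r * M"
    using assms(2) by (simp add: U_le_def v M_def)
  have Md: "M * M ^ (d - 1) = M ^ d"
    by (simp add: d_def power_Suc[symmetric])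
  have t: "cmod t ^ (d - 1) \<le> M ^ (d - 1)"
    by (simp add: M power_mono)
  have "cmod (complex_of_real lam * z * t ^ (d - 1) + \<alpha> * w * t ^ (d - 1) + \<eta> * z ^ d)
      \<le> \<bar>lam\<bar> * cmod z * cmod t ^ (d - 1) + cmod \<alpha> * cmod w * cmod t ^ (d - 1)
         + cmod \<eta> * cmod z ^ d"
    by (intro norm_triangle_le add_mono) (simp_all add: norm_mult norm_power)
  also have "\<dots> \<le> \<bar>lam\<bar> * (r * M) * M ^ (d - 1) + cmod \<alpha> * M * M ^ (d - 1)
         + cmod \<eta> * (r * M) ^ d"
    using z t M assms(1) by (intro add_mono mult_mono power_mono mult_left_mono) auto
  also have "\<dots> = (\<bar>lam\<bar> * r + cmod \<alpha> + cmod \<eta> * r ^ d) * M ^ d"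
    by (simp add: algebra_simps power_mult_distrib flip: Md)
  also have "M ^ d = max (cmod (w ^ d)) (cmod (t ^ d))"
    by (simp add: M_def norm_power max_power_eq_power_max)
  finally show ?thesis
    by (simp add: U_le_def G_hom_def Let_def v d_def)
qed

lemma norm_Psi_coords_sum_sq:
  fixes w t :: complex
  shows "cmod (\<i> * w + t) ^ 2 + cmod (\<i> * t + w) ^ 2 = 2 * (cmod w ^ 2 + cmod t ^ 2)"
  unfolding cmod_power2 by (simp add: power2_eq_square algebra_simps)

lemma max_norm_le_max_norm_Psi_coords:
  fixes w t :: complex
  shows "max (cmod w) (cmod t) \<le> max (cmod (\<i> * w + t)) (cmod (\<i> * t + w))"
proof -
  define A where "A = max (cmod (\<i> * w + t)) (cmod (\<i> * t + w))"
  have "0 \<le> A"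
    by (simp add: A_def le_max_iff_disj)
  have "cmod (\<i> * w + t) ^ 2 \<le> A ^ 2" "cmod (\<i> * t + w) ^ 2 \<le> A ^ 2"
    by (auto simp: A_def intro: power_mono)
  then have "cmod w ^ 2 \<le> A ^ 2" "cmod t ^ 2 \<le> A ^ 2"
    using norm_Psi_coords_sum_sq[of w t] by (smt (verit) zero_le_power2)+
  then have "cmod w \<le> A" "cmod t \<le> A"
    using \<open>0 \<le> A\<close> by (auto intro: power2_le_imp_le)
  then show ?thesis
    by (simp add: A_def)
qed

lemma Psi_U_le: "0 \<le> r \<Longrightarrow> v \<in> U_le r \<Longrightarrow> Psi v \<in> U_le r"
  by (cases v) (auto simp: U_le_def Psi_def
      intro: order_trans mult_left_mono max_norm_le_max_norm_Psi_coords)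

text \<open>The affine part of G contracts by lam, so starting from U_le 1 the cone parameter
decays to the fixed point c of r \<mapsto> lam r + b, where b bounds the perturbation on r \<le> 2.\<close>
lemma G_hom_iter_U_le:
  fixes lam :: real and l :: nat and \<alpha> \<eta> :: complex and c :: real
  defines "c \<equiv> (cmod \<alpha> + cmod \<eta> * 2 ^ (4 ^ l)) / (1 - lam)"
  assumes "0 \<le> lam" "lam < 1" "c \<le> 1" "v \<in> U_le 1"
  shows "(G_hom lam l \<alpha> \<eta> ^^ k) v \<in> U_le (lam ^ k + c)"
proof (induction k)
  case 0
  have "0 \<le> c"
    using assms(3) by (simp add: c_def)
  then show ?case
    using U_le_mono[of 1 "1 + c"] assms(5) by auto
next
  case (Suc k)
  define r where "r = lam ^ k + c"
  have "0 \<le> c"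
    using assms(3) by (simp add: c_def)
  then have r: "0 \<le> r" "r \<le> 2"
    using assms(2-4) power_le_one[of lam k] by (auto simp: r_def)
  have "\<bar>lam\<bar> * r + cmod \<alpha> + cmod \<eta> * r ^ (4 ^ l)
      \<le> lam * r + cmod \<alpha> + cmod \<eta> * 2 ^ (4 ^ l)"
    using r assms(2) by (simp add: mult_left_mono power_mono)
  also have "\<dots> = lam ^ Suc k + c"
    using assms(3) by (simp add: r_def c_def field_simps)
  finally have "U_le (\<bar>lam\<bar> * r + cmod \<alpha> + cmod \<eta> * r ^ (4 ^ l)) \<subseteq> U_le (lam ^ Suc k + c)"
    by (rule U_le_mono)
  with G_hom_U_le[OF r(1) Suc.IH[folded r_def]] show ?case
    by auto
qed

lemma trapping_F_Psi_G_iter: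
  fixes lam :: real and l :: nat and \<alpha> \<eta> :: complex and c :: real
  defines "c \<equiv> (cmod \<alpha> + cmod \<eta> * 2 ^ (4 ^ l)) / (1 - lam)"
  assumes "0 \<le> lam" "lam < 1" "0 \<le> lam'" "c \<le> 1"
    and "lam' * (lam ^ N + c) + cmod \<eta> * 2 ^ (4 ^ l') < 1"
  shows "trapping (F_hom lam' l' \<eta> \<circ> Psi \<circ> (G_hom lam l \<alpha> \<eta> ^^ N)) (U_rho 1)"
proof (rule trapping_if_image_subset_U_le[OF assms(6)], rule image_subsetI)
  fix v assume "v \<in> U_rho 1"
  define r where "r = lam ^ N + c"
  have "0 \<le> c"
    using assms(3) by (simp add: c_def)
  then have r: "0 \<le> r" "r \<le> 2"
    using assms(2,3,5) power_le_one[of lam N] by (auto simp: r_def)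
  have "(G_hom lam l \<alpha> \<eta> ^^ N) v \<in> U_le r"
    unfolding r_def c_def
    using assms(2,3,5) \<open>v \<in> U_rho 1\<close> U_rho_subset_U_le
    by (intro G_hom_iter_U_le) (auto simp: c_def)
  then have "F_hom lam' l' \<eta> (Psi ((G_hom lam l \<alpha> \<eta> ^^ N) v))
      \<in> U_le (lam' * r + cmod \<eta> * r ^ (4 ^ l'))"
    using G_hom_U_le[OF r(1) Psi_U_le[OF r(1)], of _ lam' l' 0 \<eta>] assms(4)
    by (simp add: F_hom_eq_G_hom)
  also have "\<dots> \<subseteq> U_le (lam' * r + cmod \<eta> * 2 ^ (4 ^ l'))"
    using r by (intro U_le_mono add_left_mono mult_left_mono power_mono) auto
  finally show "(F_hom lam' l' \<eta> \<circ> Psi \<circ> (G_hom lam l \<alpha> \<eta> ^^ N)) v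
      \<in> U_le (lam' * (lam ^ N + c) + cmod \<eta> * 2 ^ (4 ^ l'))"
    by (simp add: r_def)
qed

lemma small_perturbation_bounds:
  fixes lam lam' D D' :: real
  assumes "lam < 1" "0 < lam'" "0 < D" "0 < D'"
  obtains \<beta> where "0 < \<beta>"
    and "\<And>a e. a < \<beta> \<Longrightarrow> e < \<beta> \<Longrightarrow> lam' * ((a + e * D) / (1 - lam)) \<le> 1 / 4"
    and "\<And>e. e < \<beta> \<Longrightarrow> e * D' \<le> 1 / 4"
proof
  define \<beta> where "\<beta> = min ((1 - lam) / (4 * lam' * (1 + D))) (1 / (4 * D'))"
  show "0 < \<beta>"
    using assms by (simp add: \<beta>_def)
  show "lam' * ((a + e * D) / (1 - lam)) \<le> 1 / 4" if "a < \<beta>" "e < \<beta>" for a e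
  proof -
    have "a + e * D \<le> \<beta> * (1 + D)"
      using that assms(3) by (simp add: algebra_simps add_mono mult_right_mono)
    also have "\<dots> \<le> (1 - lam) / (4 * lam' * (1 + D)) * (1 + D)"
      using assms(3) by (intro mult_right_mono) (auto simp: \<beta>_def)
    also have "\<dots> = (1 - lam) / (4 * lam')"
      using assms(3) by simp
    finally show ?thesis
      using assms(1,2) by (simp add: field_simps)
  qed
  show "e * D' \<le> 1 / 4" if "e < \<beta>" for e
  proof -
    have "e * D' \<le> 1 / (4 * D') * D'"
      using that assms(4) by (intro mult_right_mono) (auto simp: \<beta>_def)
    then show ?thesis
      using assms(4) by simp
  qed
qed

theorem lemma6p3:
  fixes lam lam' :: real and l l' :: nat
  assumes "0 < lam" "lam < 1" "lam' > 1" "l \<ge> 1" "l' \<ge> 1"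
  shows "\<exists>\<beta>1 > 0. \<exists>\<rho> > 0. \<exists>N \<ge> 1. \<forall>\<alpha> \<eta>.
           0 < cmod \<alpha> \<and> cmod \<alpha> < \<beta>1 \<and> 0 < cmod \<eta> \<and> cmod \<eta> < \<beta>1 \<longrightarrow>
           trapping (F_hom lam' l' \<eta> \<circ> Psi \<circ> (G_hom lam l \<alpha> \<eta> ^^ N)) (U_rho \<rho>)"
proof -
  obtain \<beta> where \<beta>: "0 < \<beta>"
    "\<And>a e. a < \<beta> \<Longrightarrow> e < \<beta> \<Longrightarrow> lam' * ((a + e * 2 ^ 4 ^ l) / (1 - lam)) \<le> 1 / 4"
    "\<And>e. e < \<beta> \<Longrightarrow> e * 2 ^ 4 ^ l' \<le> 1 / 4"
    using small_perturbation_bounds[of lam lam' "2 ^ 4 ^ l" "2 ^ 4 ^ l'"] assms by auto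
  obtain n where n: "lam' * lam ^ n < 1 / 4"
    using real_arch_pow_inv[of "1 / (4 * lam')" lam] assms by (auto simp: field_simps)
  have "trapping (F_hom lam' l' \<eta> \<circ> Psi \<circ> (G_hom lam l \<alpha> \<eta> ^^ n)) (U_rho 1)"
    if "cmod \<alpha> < \<beta>" "cmod \<eta> < \<beta>" for \<alpha> \<eta>
  proof (rule trapping_F_Psi_G_iter)
    let ?c = "(cmod \<alpha> + cmod \<eta> * 2 ^ 4 ^ l) / (1 - lam)"
    have c: "lam' * ?c \<le> 1 / 4" "0 \<le> ?c"
      using \<beta>(2)[OF that] assms(2) by simp_all
    then show "?c \<le> 1"
      using assms(3) mult_right_mono[of 1 lam' ?c] by linarith
    have "lam' * (lam ^ n + ?c) = lam' * lam ^ n + lam' * ?c"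
      by (rule distrib_left)
    then show "lam' * (lam ^ n + ?c) + cmod \<eta> * 2 ^ 4 ^ l' < 1"
      using n c \<beta>(3)[OF that(2)] by linarith
  qed (use assms in auto)
  moreover have "n \<ge> 1"
    using n assms(3) by (cases n) auto
  ultimately show ?thesis
    using \<beta>(1) by (intro exI[of _ \<beta>] conjI exI[of _ "1::real"] exI[of _ n]) auto
qed

end
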